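(* Let $p$ be a real polynomial having at least one non-real root, of the form $$p(z)=\prod_{i=1}^s (z-r_i)^{l_i}\prod_{i=1}^d (z-z_i)^{m_i}\prod_{i=1}^d (z-\bar z_i)^{m_i},$$ where $d\ge1$, $r_1,\dots,r_s$ are distinct negative reals, $z_1,\dots,z_d$ are distinct with $z_k=x_k+iy_k$, $x_k<0$, $y_k>0$, and $l_i,m_i\in\mathbb N$. Let $q$ be a polynomial having no common zeros with $p$ and $\deg(q)<\deg(p)$. If there is a non-real root, say $z_1$, of $p$ such that $\Re(z_1)>r_i$ for every $i=1,\dots,s$ and $\Re(z_1)>\Re(z_i)$ for every $i=2,\dots,d$, then $(q(n)/p(n))_{n\in\mathbb Z_+}$ is not a Hausdorff moment sequence.
   Context: A sequence $(x_n)_{n\in\mathbb Z_+}$ of positive numbers is a Hausdorff moment sequence if there is a positive Radon measure $\mu$ on $[0,1]$ with $x_n=\int_0^1 t^n\,d\mu(t)$ for all $n\in\mathbb Z_+$. *)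

theory Defs
  imports "HOL-Analysis.Analysis" "HOL-Computational_Algebra.Polynomial"
begin

definition hausdorff_moment_seq :: "(nat \<Rightarrow> real) \<Rightarrow> bool" where
  "hausdorff_moment_seq x \<longleftrightarrow>
     (\<forall>n. x n > 0) \<and>
     (\<exists>M :: real measure.
        sets M = sets (restrict_space borel {0..1::real}) \<and>
        emeasure M (space M) < \<infinity> \<and>
        (\<forall>n. x n = (\<integral>t. t ^ n \<partial>M)))"

end

theory Submission
  imports Defs "HOL-Computational_Algebra.Fundamental_Theorem_Algebra"
begin

text \<open>
  Over the complex numbers, q/p has a partial fraction expansion: q(x)/p(x) is the sum of
  c(a,j) / (x - a)^(j+1) over the roots a of p, all of which have Re a < 0. Since the n-th moment of
  t^(-a-1) (-ln t)^j / j! on [0, 1] is 1 / (n - a)^(j+1), the sequence q(n)/p(n) is the moment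
  sequence of g(t) = Re (sum of c(a,j) / j! * t^(-a-1) (-ln t)^j), which is continuous on (0, 1).
  If it were also the moment sequence of a positive measure on [0, 1], Weierstrass approximation
  would make the measure and g integrate every continuous function alike, forcing g >= 0 on (0, 1).
  But g(exp (-u)) = exp u * Re (sum of c(a,j) / j! * exp (a u) u^j), and as u grows this exponential
  polynomial is dominated by the two terms of highest order at z1 and cnj z1. Their sum
  2 exp (u Re z1) u^K Re (c exp (i u Im z1)), with K + 1 the multiplicity of z1 and c nonzero,
  changes sign, so g takes negative values.
\<close>

section \<open>Partial fractions\<close>

text \<open>\<open>pfrac_basis A \<mu> a j\<close> is P / (x - a)^(j+1), where P is the product of the (x - b)^(\<mu> b)
  over b in A; hence \<open>pfrac_sum A \<mu> c\<close> / P is the sum of c a j / (x - a)^(j+1).\<close>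

definition pfrac_basis :: "'a::field set \<Rightarrow> ('a \<Rightarrow> nat) \<Rightarrow> 'a \<Rightarrow> nat \<Rightarrow> 'a poly" where
  "pfrac_basis A \<mu> a j = [:-a, 1:] ^ (\<mu> a - Suc j) * (\<Prod>b\<in>A - {a}. [:-b, 1:] ^ \<mu> b)"

definition pfrac_sum :: "'a::field set \<Rightarrow> ('a \<Rightarrow> nat) \<Rightarrow> ('a \<Rightarrow> nat \<Rightarrow> 'a) \<Rightarrow> 'a poly" where
  "pfrac_sum A \<mu> c = (\<Sum>a\<in>A. \<Sum>j<\<mu> a. smult (c a j) (pfrac_basis A \<mu> a j))"

lemma pfrac_basis_mult_linear_power:
  assumes "finite A" "a \<in> A" "j < \<mu> a"
  shows "pfrac_basis A \<mu> a j * [:-a, 1:] ^ Suc j = (\<Prod>b\<in>A. [:-b, 1:] ^ \<mu> b)"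
proof -
  have "\<mu> a = (\<mu> a - Suc j) + Suc j"
    using assms(3) by simp
  then have "[:-a, 1:] ^ \<mu> a = [:-a, 1:] ^ (\<mu> a - Suc j) * [:-a, 1:] ^ Suc j"
    by (metis power_add)
  then show ?thesis
    using assms(1,2) by (simp add: pfrac_basis_def prod.remove mult_ac del: power_Suc)
qed

lemma degree_prod_linear_power: "degree (\<Prod>a\<in>A. [:-a, 1:] ^ \<mu> a :: 'a::idom poly) = sum \<mu> A"
  by (subst degree_prod_sum_eq) (simp_all add: degree_linear_power)

lemma degree_pfrac_basis:
  assumes "finite A" "a \<in> A" "j < \<mu> a"
  shows "degree (pfrac_basis A \<mu> a j) = sum \<mu> A - Suc j"
proof -
  have "pfrac_basis A \<mu> a j \<noteq> 0"
    using assms(1) by (simp add: pfrac_basis_def)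
  then have "degree (pfrac_basis A \<mu> a j * [:-a, 1:] ^ Suc j) = degree (pfrac_basis A \<mu> a j) + Suc j"
    by (simp add: degree_mult_eq degree_linear_power del: power_Suc)
  then show ?thesis
    using pfrac_basis_mult_linear_power[where \<mu> = \<mu>, OF assms] by (simp add: degree_prod_linear_power)
qed

lemma poly_pfrac_basis_top_neq_0:
  assumes "finite A" "a \<in> A"
  shows "poly (pfrac_basis A \<mu> a (\<mu> a - 1)) a \<noteq> 0"
  using assms by (simp add: pfrac_basis_def poly_prod)

lemma poly_pfrac_basis_eq_0:
  assumes "finite A" "a \<in> A" "b \<in> A" "\<mu> a > 0" "j < \<mu> b" "(b, j) \<noteq> (a, \<mu> a - 1)"
  shows "poly (pfrac_basis A \<mu> b j) a = 0"
  using assms by (cases "b = a") (auto simp: pfrac_basis_def poly_prod)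

lemma linear_mult_pfrac_basis_decr:
  assumes "finite A" "a \<in> A" "b \<in> A" "\<mu> a > 0" "j < (\<mu>(a := \<mu> a - 1)) b"
  shows "[:-a, 1:] * pfrac_basis A (\<mu>(a := \<mu> a - 1)) b j = pfrac_basis A \<mu> b j"
proof (cases "b = a")
  case True
  have "(\<Prod>c\<in>A - {a}. [:-c, 1:] ^ (\<mu>(a := \<mu> a - 1)) c) = (\<Prod>c\<in>A - {a}. [:-c, 1:] ^ \<mu> c)"
    by (rule prod.cong) auto
  moreover have "\<mu> a - Suc j = Suc (\<mu> a - 1 - Suc j)"
    using assms True by auto
  ultimately show ?thesis
    using True by (simp add: pfrac_basis_def algebra_simps)
next
  case False
  have "[:-a, 1:] ^ \<mu> a = [:-a, 1:] * [:-a, 1:] ^ (\<mu> a - 1)"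
    using assms(4) by (metis Suc_diff_1 power_Suc)
  moreover have "(\<Prod>c\<in>A - {b} - {a}. [:-c, 1:] ^ (\<mu>(a := \<mu> a - 1)) c)
      = (\<Prod>c\<in>A - {b} - {a}. [:-c, 1:] ^ \<mu> c)"
    by (rule prod.cong) auto
  ultimately have "(\<Prod>c\<in>A - {b}. [:-c, 1:] ^ \<mu> c)
      = [:-a, 1:] * (\<Prod>c\<in>A - {b}. [:-c, 1:] ^ (\<mu>(a := \<mu> a - 1)) c)"
    using assms False by (simp add: prod.remove[of "A - {b}" a] mult.assoc del: mult_pCons_left)
  then show ?thesis
    using False by (simp add: pfrac_basis_def mult.left_commute del: mult_pCons_left)
qed

lemma linear_mult_pfrac_sum_decr:
  assumes "finite A" "a \<in> A" "\<mu> a > 0"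
  shows "smult c0 (pfrac_basis A \<mu> a (\<mu> a - 1)) + [:-a, 1:] * pfrac_sum A (\<mu>(a := \<mu> a - 1)) c
       = pfrac_sum A \<mu> (\<lambda>b j. if (b, j) = (a, \<mu> a - 1) then c0 else c b j)"
    (is "_ = pfrac_sum A \<mu> ?c")
proof -
  let ?\<mu> = "\<mu>(a := \<mu> a - 1)"
  let ?B = "\<lambda>b j. smult (c b j) (pfrac_basis A \<mu> b j)"
  have shift: "[:-a, 1:] * pfrac_basis A ?\<mu> b j = pfrac_basis A \<mu> b j" if "b \<in> A" "j < ?\<mu> b" for b j
    by (rule linear_mult_pfrac_basis_decr) (use assms that in auto)
  have "[:-a, 1:] * pfrac_sum A ?\<mu> c = (\<Sum>b\<in>A. \<Sum>j<?\<mu> b. ?B b j)"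
    unfolding pfrac_sum_def sum_distrib_left
    by (intro sum.cong refl) (auto simp only: mult_smult_right shift lessThan_iff)
  also have "\<dots> = (\<Sum>j<\<mu> a - 1. ?B a j) + (\<Sum>b\<in>A - {a}. \<Sum>j<\<mu> b. ?B b j)"
    using assms by (simp add: sum.remove)
  finally have shifted: "[:-a, 1:] * pfrac_sum A ?\<mu> c = \<dots>" .
  have "{..<\<mu> a} = insert (\<mu> a - 1) {..<\<mu> a - 1}"
    using assms(3) by auto
  then have "(\<Sum>j<\<mu> a. smult (?c a j) (pfrac_basis A \<mu> a j))
      = smult c0 (pfrac_basis A \<mu> a (\<mu> a - 1)) + (\<Sum>j<\<mu> a - 1. ?B a j)"
    by simp
  moreover have "(\<Sum>b\<in>A - {a}. \<Sum>j<\<mu> b. smult (?c b j) (pfrac_basis A \<mu> b j))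
      = (\<Sum>b\<in>A - {a}. \<Sum>j<\<mu> b. ?B b j)"
    by (intro sum.cong refl) auto
  ultimately show ?thesis
    using assms shifted by (simp add: pfrac_sum_def sum.remove)
qed

lemma pfrac_sum_exists:
  fixes Q :: "'a::field poly"
  assumes "finite A" "degree Q < sum \<mu> A"
  shows "\<exists>c. Q = pfrac_sum A \<mu> c"
  using assms(2)
proof (induction "sum \<mu> A" arbitrary: \<mu> Q)
  case 0
  then show ?case by simp
next
  case (Suc n)
  then obtain a where a: "a \<in> A" "\<mu> a > 0"
    by (metis gr0I sum.neutral nat.distinct(1))
  let ?\<mu> = "\<mu>(a := \<mu> a - 1)"
  have n: "n = sum ?\<mu> A"
    using Suc.hyps(2) a assms(1) by (simp add: sum.remove)
  define W where "W = pfrac_basis A \<mu> a (\<mu> a - 1)"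
  have "poly W a \<noteq> 0"
    unfolding W_def using assms(1) a(1) by (rule poly_pfrac_basis_top_neq_0)
  have "degree W < Suc n"
    using degree_pfrac_basis[OF assms(1) a(1), of "\<mu> a - 1" \<mu>] a(2) Suc.hyps(2) by (simp add: W_def)
  define c0 where "c0 = poly Q a / poly W a"
  have "poly (Q - smult c0 W) a = 0"
    unfolding c0_def using \<open>poly W a \<noteq> 0\<close> by simp
  then obtain Q2 where Q2: "Q - smult c0 W = [:-a, 1:] * Q2"
    by (metis dvdE poly_eq_0_iff_dvd)
  have "degree ([:-a, 1:] * Q2) < Suc n"
    unfolding Q2[symmetric] using Suc.prems Suc.hyps(2) \<open>degree W < Suc n\<close>
    by (intro degree_diff_less) (auto intro: le_less_trans[OF degree_smult_le])
  obtain c where c: "Q2 = pfrac_sum A ?\<mu> c"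
  proof (cases "Q2 = 0")
    case True
    then show ?thesis
      by (intro that[of "\<lambda>_ _. 0"]) (simp add: pfrac_sum_def)
  next
    case False
    then have "degree Q2 < sum ?\<mu> A"
      using n \<open>degree ([:-a, 1:] * Q2) < Suc n\<close> by (simp add: degree_mult_eq del: mult_pCons_left)
    then show ?thesis
      using Suc.hyps(1)[OF n] that by blast
  qed
  have "Q = smult c0 W + [:-a, 1:] * pfrac_sum A ?\<mu> c"
    using Q2 c by (simp add: algebra_simps del: mult_pCons_left)
  then show ?case
    unfolding W_def linear_mult_pfrac_sum_decr[where \<mu> = \<mu>, OF assms(1) a] by blast
qed

lemma poly_pfrac_sum_at_pole:
  assumes "finite A" "a \<in> A" "\<mu> a > 0"
  shows "poly (pfrac_sum A \<mu> c) a = c a (\<mu> a - 1) * poly (pfrac_basis A \<mu> a (\<mu> a - 1)) a"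
proof -
  let ?I = "SIGMA b:A. {..<\<mu> b}"
  have top: "(a, \<mu> a - 1) \<in> ?I"
    using assms by auto
  have "poly (pfrac_sum A \<mu> c) a = (\<Sum>b\<in>A. \<Sum>j<\<mu> b. c b j * poly (pfrac_basis A \<mu> b j) a)"
    by (simp add: pfrac_sum_def poly_sum)
  also have "\<dots> = (\<Sum>(b, j)\<in>?I. c b j * poly (pfrac_basis A \<mu> b j) a)"
    using assms(1) by (simp add: sum.Sigma)
  also have "\<dots> = c a (\<mu> a - 1) * poly (pfrac_basis A \<mu> a (\<mu> a - 1)) a
      + (\<Sum>(b, j)\<in>?I - {(a, \<mu> a - 1)}. c b j * poly (pfrac_basis A \<mu> b j) a)"
    using assms(1) top by (subst sum.remove[OF _ top]) auto
  also have "(\<Sum>(b, j)\<in>?I - {(a, \<mu> a - 1)}. c b j * poly (pfrac_basis A \<mu> b j) a) = 0"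
  proof (intro sum.neutral ballI)
    fix bj assume "bj \<in> ?I - {(a, \<mu> a - 1)}"
    then obtain b j where "bj = (b, j)" "b \<in> A" "j < \<mu> b" "(b, j) \<noteq> (a, \<mu> a - 1)"
      by auto
    then show "(case bj of (b, j) \<Rightarrow> c b j * poly (pfrac_basis A \<mu> b j) a) = 0"
      using poly_pfrac_basis_eq_0[where \<mu> = \<mu>, OF assms(1,2) _ assms(3)] by simp
  qed
  finally show ?thesis by simp
qed

lemma poly_pfrac_sum_divide:
  assumes "finite A" "poly (\<Prod>b\<in>A. [:-b, 1:] ^ \<mu> b) x \<noteq> 0"
  shows "poly (pfrac_sum A \<mu> c) x / poly (\<Prod>b\<in>A. [:-b, 1:] ^ \<mu> b) x
       = (\<Sum>(a, j)\<in>(SIGMA a:A. {..<\<mu> a}). c a j / (x - a) ^ Suc j)"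
proof -
  let ?P = "\<Prod>b\<in>A. [:-b, 1:] ^ \<mu> b"
  have basis: "poly (pfrac_basis A \<mu> a j) x = poly ?P x / (x - a) ^ Suc j" if "a \<in> A" "j < \<mu> a" for a j
  proof -
    have "poly (pfrac_basis A \<mu> a j) x * (x - a) ^ Suc j = poly ?P x"
      using arg_cong[OF pfrac_basis_mult_linear_power[where \<mu> = \<mu>, OF assms(1) that], of "\<lambda>p. poly p x"]
      by (simp del: power.simps)
    moreover have "(x - a) ^ Suc j \<noteq> 0"
      using assms(2) calculation by auto
    ultimately show ?thesis
      by (simp add: eq_divide_eq del: power.simps)
  qed
  have "poly (pfrac_sum A \<mu> c) x = (\<Sum>a\<in>A. \<Sum>j<\<mu> a. c a j * poly (pfrac_basis A \<mu> a j) x)"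
    by (simp add: pfrac_sum_def poly_sum)
  also have "\<dots> = (\<Sum>(a, j)\<in>(SIGMA a:A. {..<\<mu> a}). c a j * poly (pfrac_basis A \<mu> a j) x)"
    using assms(1) by (simp add: sum.Sigma)
  also have "\<dots> = poly ?P x * (\<Sum>(a, j)\<in>(SIGMA a:A. {..<\<mu> a}). c a j / (x - a) ^ Suc j)"
    unfolding sum_distrib_left by (intro sum.cong refl) (auto simp: basis)
  finally show ?thesis
    using assms(2) by simp
qed

section \<open>Real polynomials and complex conjugation\<close>

lemma poly_map_poly_of_real: "poly (map_poly of_real p) (of_real x) = of_real (poly p x)"
  by (induction p) (auto simp: map_poly_pCons)

lemma map_poly_cnj_of_real: "map_poly cnj (map_poly of_real p) = map_poly of_real p"
  by (rule poly_eqI) (simp add: coeff_map_poly)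

lemma map_poly_cnj_mult: "map_poly cnj (p * q) = map_poly cnj p * map_poly cnj q"
  by (rule poly_eq_poly_eq_iff[THEN iffD1]) (auto simp: fun_eq_iff)

lemma map_poly_cnj_linear_power: "map_poly cnj ([:-a, 1:] ^ n) = [:-cnj a, 1:] ^ n"
  by (rule poly_eq_poly_eq_iff[THEN iffD1]) (auto simp: fun_eq_iff)

lemma linear_power_dvd_cnj:
  assumes "map_poly cnj P = P" "[:-a, 1:] ^ n dvd P"
  shows "[:-cnj a, 1:] ^ n dvd P"
proof -
  obtain k where "P = [:-a, 1:] ^ n * k"
    using assms(2) by (elim dvdE)
  then have "map_poly cnj P = [:-cnj a, 1:] ^ n * map_poly cnj k"
    by (simp only: map_poly_cnj_mult map_poly_cnj_linear_power)
  then show ?thesis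
    using assms(1) by (metis dvd_triv_left)
qed

lemma order_cnj:
  assumes "map_poly cnj P = P" "P \<noteq> 0"
  shows "order (cnj a) P = order a P"
proof (rule order_unique_lemma)
  show "[:-cnj a, 1:] ^ order a P dvd P"
    using assms(1) order_1 by (rule linear_power_dvd_cnj)
  show "\<not> [:-cnj a, 1:] ^ Suc (order a P) dvd P"
  proof
    assume "[:-cnj a, 1:] ^ Suc (order a P) dvd P"
    from linear_power_dvd_cnj[OF assms(1) this] show False
      using order_2[OF assms(2)] by simp
  qed
qed

lemma map_poly_cnj_pfrac_basis:
  assumes "finite A" "a \<in> A" "cnj a \<in> A" "j < \<mu> a" "\<mu> (cnj a) = \<mu> a"
    and real: "map_poly cnj (\<Prod>b\<in>A. [:-b, 1:] ^ \<mu> b) = (\<Prod>b\<in>A. [:-b, 1:] ^ \<mu> b)"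
  shows "map_poly cnj (pfrac_basis A \<mu> a j) = pfrac_basis A \<mu> (cnj a) j"
proof -
  have "map_poly cnj (pfrac_basis A \<mu> a j) * [:-cnj a, 1:] ^ Suc j = (\<Prod>b\<in>A. [:-b, 1:] ^ \<mu> b)"
    using pfrac_basis_mult_linear_power[where \<mu> = \<mu>, OF assms(1,2,4)] real
    by (metis map_poly_cnj_linear_power map_poly_cnj_mult)
  also have "\<dots> = pfrac_basis A \<mu> (cnj a) j * [:-cnj a, 1:] ^ Suc j"
    using pfrac_basis_mult_linear_power[where \<mu> = \<mu> and j = j, OF assms(1,3)] assms(4,5) by simp
  finally show ?thesis
    by (simp del: power_Suc)
qed

lemma pfrac_sum_top_coeff_cnj:
  assumes "finite A" "a \<in> A" "cnj a \<in> A" "\<mu> a > 0" "\<mu> (cnj a) = \<mu> a"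
    and "map_poly cnj (\<Prod>b\<in>A. [:-b, 1:] ^ \<mu> b) = (\<Prod>b\<in>A. [:-b, 1:] ^ \<mu> b)"
    and "map_poly cnj (pfrac_sum A \<mu> c) = pfrac_sum A \<mu> c"
  shows "c (cnj a) (\<mu> a - 1) = cnj (c a (\<mu> a - 1))"
proof -
  define W where "W = pfrac_basis A \<mu> a (\<mu> a - 1)"
  have "c (cnj a) (\<mu> a - 1) * cnj (poly W a) = poly (pfrac_sum A \<mu> c) (cnj a)"
    using poly_pfrac_sum_at_pole[OF assms(1,3), of \<mu> c]
      map_poly_cnj_pfrac_basis[OF assms(1-3) _ assms(5,6)]
      assms(4,5) poly_map_poly_cnj[of W "cnj a"] unfolding W_def by simp
  also have "\<dots> = cnj (c a (\<mu> a - 1)) * cnj (poly W a)"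
    using poly_map_poly_cnj[of "pfrac_sum A \<mu> c" "cnj a"]
      poly_pfrac_sum_at_pole[where \<mu> = \<mu> and c = c, OF assms(1,2,4)]
    unfolding assms(7) W_def by simp
  finally show ?thesis
    using poly_pfrac_basis_top_neq_0[OF assms(1,2), of \<mu>] unfolding W_def by simp
qed

lemma real_pfrac_decomposition:
  fixes p q :: "real poly"
  defines "P \<equiv> map_poly complex_of_real p" and "Q \<equiv> map_poly complex_of_real q"
  assumes "lead_coeff p = 1" "degree q < degree p"
  obtains c :: "complex \<Rightarrow> nat \<Rightarrow> complex" where
    "\<And>x. poly P x \<noteq> 0 \<Longrightarrow>
       poly Q x / poly P x = (\<Sum>(a, j)\<in>(SIGMA a:{a. poly P a = 0}. {..<order a P}). c a j / (x - a) ^ Suc j)"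
    "\<And>a. poly P a = 0 \<Longrightarrow> poly Q a \<noteq> 0 \<Longrightarrow> c a (order a P - 1) \<noteq> 0"
    "\<And>a. poly P a = 0 \<Longrightarrow> c (cnj a) (order a P - 1) = cnj (c a (order a P - 1))"
proof -
  define A where "A = {a. poly P a = 0}"
  define \<mu> where "\<mu> = (\<lambda>a. order a P)"
  have "lead_coeff P = 1"
    using assms(3) by (simp add: P_def degree_map_poly coeff_map_poly)
  then have "P \<noteq> 0"
    by auto
  then have "finite A"
    unfolding A_def by (rule poly_roots_finite)
  have P_prod: "P = (\<Prod>a\<in>A. [:-a, 1:] ^ \<mu> a)"
    using complex_poly_decompose[of P] \<open>lead_coeff P = 1\<close> by (simp add: A_def \<mu>_def)
  have \<mu>_pos: "\<mu> a > 0" if "a \<in> A" for a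
    using that \<open>P \<noteq> 0\<close> by (simp add: A_def \<mu>_def order_root)
  have P_real: "map_poly cnj P = P" and Q_real: "map_poly cnj Q = Q"
    by (simp_all add: P_def Q_def map_poly_cnj_of_real)
  have "degree Q = degree q" "degree P = degree p"
    by (simp_all add: P_def Q_def degree_map_poly)
  then have "degree Q < sum \<mu> A"
    using assms(4) by (metis P_prod degree_prod_linear_power)
  then obtain c where Q_eq: "Q = pfrac_sum A \<mu> c"
    using pfrac_sum_exists[OF \<open>finite A\<close>] by blast
  show ?thesis
  proof (rule that[of c])
    show "poly Q x / poly P x
        = (\<Sum>(a, j)\<in>(SIGMA a:{a. poly P a = 0}. {..<order a P}). c a j / (x - a) ^ Suc j)"
      if "poly P x \<noteq> 0" for x
      using poly_pfrac_sum_divide[where \<mu> = \<mu> and x = x and c = c, OF \<open>finite A\<close>] that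
      unfolding P_prod[symmetric] Q_eq[symmetric] by (simp add: A_def \<mu>_def)
    show "c a (order a P - 1) \<noteq> 0" if "poly P a = 0" "poly Q a \<noteq> 0" for a
      using that poly_pfrac_sum_at_pole[where \<mu> = \<mu> and a = a and c = c, OF \<open>finite A\<close> _ \<mu>_pos]
      unfolding Q_eq[symmetric] by (auto simp: A_def \<mu>_def)
    show "c (cnj a) (order a P - 1) = cnj (c a (order a P - 1))" if "poly P a = 0" for a
    proof -
      have "a \<in> A" "cnj a \<in> A"
        using that P_real poly_map_poly_cnj[of P "cnj a"] by (auto simp: A_def)
      then show ?thesis
        using pfrac_sum_top_coeff_cnj[where \<mu> = \<mu> and a = a and c = c, OF \<open>finite A\<close> _ _ \<mu>_pos]
          order_cnj[OF P_real \<open>P \<noteq> 0\<close>] P_real Q_real unfolding P_prod[symmetric] Q_eq[symmetric] by (simp add: \<mu>_def)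
    qed
  qed
qed

section \<open>Exponential polynomials\<close>

lemma tendsto_exp_neg_mult_power_0:
  assumes "(\<delta>::real) > 0"
  shows "((\<lambda>u. exp (- \<delta> * u) * u ^ j) \<longlongrightarrow> 0) at_top"
proof -
  have "filterlim (\<lambda>u. \<delta> * u) at_top at_top"
    by (rule filterlim_tendsto_pos_mult_at_top[OF tendsto_const assms filterlim_ident])
  then have "((\<lambda>u. (\<delta> * u) ^ j / exp (\<delta> * u) / \<delta> ^ j) \<longlongrightarrow> 0 / \<delta> ^ j) at_top"
    by (intro tendsto_divide tendsto_const filterlim_compose[OF tendsto_power_div_exp_0]) (use assms in auto)
  moreover have "(\<delta> * u) ^ j / exp (\<delta> * u) / \<delta> ^ j = exp (- \<delta> * u) * u ^ j" for u
    using assms by (simp add: exp_minus field_simps)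
  ultimately show ?thesis
    by simp
qed

lemma tendsto_exp_mult_power_div_power_0:
  fixes a :: complex
  assumes "Re a < x \<or> (Re a = x \<and> j < K)"
  shows "((\<lambda>u::real. exp ((a - of_real x) * of_real u) * of_real (u ^ j / u ^ K)) \<longlongrightarrow> 0) at_top"
proof -
  have norm_eq: "norm (exp ((a - of_real x) * of_real u) * of_real (u ^ j / u ^ K))
      = exp ((Re a - x) * u) * (u ^ j / u ^ K)" if "u \<ge> 1" for u :: real
    using that by (simp add: norm_mult norm_divide norm_power)
  show ?thesis
    using assms
  proof
    assume "Re a < x"
    show ?thesis
    proof (rule Lim_null_comparison)
      show "((\<lambda>u. exp (- (x - Re a) * u) * u ^ j) \<longlongrightarrow> 0) at_top"
        using \<open>Re a < x\<close> by (intro tendsto_exp_neg_mult_power_0) simp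
      have "exp ((Re a - x) * u) * (u ^ j / u ^ K) \<le> exp (- (x - Re a) * u) * u ^ j" if "u \<ge> 1" for u :: real
        using that by (intro mult_mono) (auto simp: divide_le_eq mult_le_cancel_left1)
      then show "\<forall>\<^sub>F u in at_top. norm (exp ((a - of_real x) * of_real u) * of_real (u ^ j / u ^ K))
          \<le> exp (- (x - Re a) * u) * u ^ j"
        using norm_eq by (intro eventually_at_top_linorderI[of 1]) simp
    qed
  next
    assume "Re a = x \<and> j < K"
    show ?thesis
    proof (rule Lim_null_comparison)
      show "((\<lambda>u::real. inverse (u ^ (K - j))) \<longlongrightarrow> 0) at_top"
        using \<open>Re a = x \<and> j < K\<close>
        by (intro tendsto_inverse_0_at_top filterlim_pow_at_top filterlim_ident) simp
      have "u ^ j / u ^ K = inverse (u ^ (K - j))" if "u \<ge> 1" for u :: real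
        using that \<open>Re a = x \<and> j < K\<close> by (simp add: power_diff field_simps)
      then show "\<forall>\<^sub>F u in at_top. norm (exp ((a - of_real x) * of_real u) * of_real (u ^ j / u ^ K))
          \<le> inverse (u ^ (K - j))"
        using norm_eq \<open>Re a = x \<and> j < K\<close> by (intro eventually_at_top_linorderI[of 1]) simp
    qed
  qed
qed

lemma exists_Re_mult_cis_eq_neg_norm:
  assumes "y > 0"
  shows "\<exists>u>U. Re (c * cis (y * u)) = - cmod c"
proof -
  define \<theta> where "\<theta> = pi - Arg c"
  obtain n :: nat where n: "(U * y - \<theta>) / (2 * pi) < real n"
    using reals_Archimedean2 by blast
  define u where "u = (\<theta> + 2 * pi * real n) / y"
  have "u > U"
    using n assms by (simp add: u_def field_simps)
  have "y * u = \<theta> + 2 * pi * real n"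
    using assms by (simp add: u_def)
  then have "cis (y * u) = cis \<theta> * cis (2 * pi * real n)"
    by (simp only: cis_mult)
  also have "cis (2 * pi * real n) = 1"
    by (rule cis_multiple_2pi) simp
  finally have "c * cis (y * u) = of_real (cmod c) * (cis (Arg c) * cis \<theta>)"
    using rcis_cmod_Arg[of c] by (simp add: rcis_def mult.assoc)
  also have "cis (Arg c) * cis \<theta> = -1"
    by (simp add: cis_mult \<theta>_def)
  finally have "Re (c * cis (y * u)) = - cmod c"
    by simp
  with \<open>u > U\<close> show ?thesis
    by blast
qed

lemma conj_exp_pair_eq:
  "c * exp ((w - of_real (Re w)) * of_real u) + cnj c * exp ((cnj w - of_real (Re w)) * of_real u)
     = of_real (2 * Re (c * cis (Im w * u)))"
proof -
  have "(w - of_real (Re w)) * of_real u = \<i> * of_real (Im w * u)"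
    by (simp add: complex_eq_iff)
  then have "exp ((w - of_real (Re w)) * of_real u) = cis (Im w * u)"
    by (simp only: cis_conv_exp)
  moreover have "(cnj w - of_real (Re w)) * of_real u = \<i> * of_real (- (Im w * u))"
    by (simp add: complex_eq_iff)
  then have "exp ((cnj w - of_real (Re w)) * of_real u) = cnj (cis (Im w * u))"
    by (simp only: cis_cnj) (simp only: cis_conv_exp)
  ultimately show ?thesis
    by (simp only: complex_cnj_mult[symmetric] complex_add_cnj)
qed

definition exp_poly :: "(complex \<times> nat) set \<Rightarrow> (complex \<Rightarrow> nat \<Rightarrow> complex) \<Rightarrow> real \<Rightarrow> complex" where
  "exp_poly S \<kappa> u = (\<Sum>(a, j)\<in>S. \<kappa> a j * exp (a * of_real u) * of_real (u ^ j))"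

lemma exp_poly_rescale:
  assumes "u > 0"
  shows "exp_poly S \<kappa> u = of_real (exp (x * u) * u ^ K)
           * (\<Sum>(a, j)\<in>S. \<kappa> a j * exp ((a - of_real x) * of_real u) * of_real (u ^ j / u ^ K))"
proof -
  have "exp (a * of_real u) * of_real (u ^ j)
      = of_real (exp (x * u) * u ^ K) * (exp ((a - of_real x) * of_real u) * of_real (u ^ j / u ^ K))"
    for a :: complex and j
  proof -
    have "exp (a * of_real u) = of_real (exp (x * u)) * exp ((a - of_real x) * of_real u)"
      by (simp add: exp_of_real[symmetric] exp_add[symmetric] algebra_simps)
    moreover have "of_real (u ^ j) = (of_real (u ^ K) * of_real (u ^ j / u ^ K) :: complex)"
      using assms by (simp flip: of_real_mult)
    ultimately show ?thesis
      by (simp only: of_real_mult mult_ac)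
  qed
  then have "\<kappa> a j * exp (a * of_real u) * of_real (u ^ j)
      = of_real (exp (x * u) * u ^ K) * (\<kappa> a j * exp ((a - of_real x) * of_real u) * of_real (u ^ j / u ^ K))"
    for a j
    by (simp only: mult.assoc) (simp only: mult_ac)
  then show ?thesis
    by (simp only: exp_poly_def sum_distrib_left case_prod_unfold)
qed

lemma tendsto_exp_poly_rescaled_0:
  assumes "finite S" "\<And>a j. (a, j) \<in> S \<Longrightarrow> Re a < x \<or> (Re a = x \<and> j < K)"
  shows "((\<lambda>u. \<Sum>(a, j)\<in>S. \<kappa> a j * exp ((a - of_real x) * of_real u) * of_real (u ^ j / u ^ K))
           \<longlongrightarrow> 0) at_top"
proof (rule tendsto_null_sum)
  fix aj
  assume "aj \<in> S"
  then have "((\<lambda>u. \<kappa> (fst aj) (snd aj)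
      * (exp ((fst aj - of_real x) * of_real u) * of_real (u ^ snd aj / u ^ K)))
      \<longlongrightarrow> \<kappa> (fst aj) (snd aj) * 0) at_top"
    using assms(2)[of "fst aj" "snd aj"]
    by (intro tendsto_mult tendsto_const tendsto_exp_mult_power_div_power_0) simp
  then show "((\<lambda>u. case aj of (a, j) \<Rightarrow>
      \<kappa> a j * exp ((a - of_real x) * of_real u) * of_real (u ^ j / u ^ K)) \<longlongrightarrow> 0) at_top"
    by (simp add: case_prod_unfold mult.assoc)
qed

text \<open>After rescaling by exp (u Re w) u^K only the two top-order terms at w and cnj w survive as u
  grows; their sum 2 Re (\<kappa> w K exp (i u Im w)) reaches -2 |\<kappa> w K| for arbitrarily large u.\<close>

lemma exp_poly_Re_negative_somewhere:
  assumes "finite S" "(w, K) \<in> S" "(cnj w, K) \<in> S" "Im w > 0"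
    and top: "\<kappa> w K \<noteq> 0" "\<kappa> (cnj w) K = cnj (\<kappa> w K)"
    and dominated: "\<And>a j. (a, j) \<in> S - {(w, K), (cnj w, K)} \<Longrightarrow> Re a < Re w \<or> (Re a = Re w \<and> j < K)"
  shows "\<exists>u>0. Re (exp_poly S \<kappa> u) < 0"
proof -
  define c where "c = \<kappa> w K"
  define T where "T = (\<lambda>a j u. \<kappa> a j * exp ((a - of_real (Re w)) * of_real u) * of_real (u ^ j / u ^ K))"
  define R where "R = (\<lambda>u. \<Sum>(a, j)\<in>S - {(w, K), (cnj w, K)}. T a j u)"
  have "(R \<longlongrightarrow> 0) at_top"
    unfolding R_def T_def using assms(1) dominated by (intro tendsto_exp_poly_rescaled_0) auto
  moreover have "cmod c > 0"
    using top(1) by (simp add: c_def)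
  ultimately have "\<forall>\<^sub>F u in at_top. norm (R u) < cmod c"
    by (simp add: tendsto_iff dist_norm)
  then obtain U where U: "\<And>u. u \<ge> U \<Longrightarrow> norm (R u) < cmod c"
    by (auto simp: eventually_at_top_linorder)
  obtain u where "u > max U 1" and u: "Re (c * cis (Im w * u)) = - cmod c"
    using exists_Re_mult_cis_eq_neg_norm[OF \<open>Im w > 0\<close>] by blast
  then have "u > 0"
    by simp
  have "T w K u + T (cnj w) K u = of_real (2 * Re (c * cis (Im w * u)))"
    using \<open>u > 0\<close> top(2) conj_exp_pair_eq[of c w u] by (simp add: T_def c_def)
  then have "Re (T w K u + T (cnj w) K u) = - 2 * cmod c"
    using u by simp
  have "w \<noteq> cnj w"
    using \<open>Im w > 0\<close> by (auto simp: complex_eq_iff)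
  then have "(\<Sum>(a, j)\<in>S. T a j u) = T w K u + T (cnj w) K u + R u"
    using assms(1-3) sum.remove[OF assms(1,2), of "\<lambda>(a, j). T a j u"]
      sum.remove[of "S - {(w, K)}" "(cnj w, K)" "\<lambda>(a, j). T a j u"]
    unfolding R_def by (simp add: insert_commute add.assoc flip: Diff_insert2)
  then have "Re (exp_poly S \<kappa> u) = exp (Re w * u) * u ^ K * (Re (T w K u + T (cnj w) K u) + Re (R u))"
    using exp_poly_rescale[OF \<open>u > 0\<close>, of S \<kappa> "Re w" K] by (simp add: T_def)
  moreover have "Re (T w K u + T (cnj w) K u) + Re (R u) < 0"
  proof -
    have "norm (R u) < cmod c"
      using U \<open>u > max U 1\<close> by simp
    then show ?thesis
      using complex_Re_le_cmod[of "R u"] \<open>Re (T w K u + T (cnj w) K u) = - 2 * cmod c\<close> \<open>cmod c > 0\<close>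
      by linarith
  qed
  ultimately have "Re (exp_poly S \<kappa> u) < 0"
    using \<open>u > 0\<close> by (simp add: mult_pos_neg)
  with \<open>u > 0\<close> show ?thesis
    by blast
qed

section \<open>The densities t^(b-1) (-ln t)^k on [0, 1]\<close>

lemma tendsto_exp_mult_ln_power_0:
  assumes "(\<sigma>::real) > 0"
  shows "((\<lambda>t. exp (\<sigma> * ln t) * \<bar>ln t\<bar> ^ j) \<longlongrightarrow> 0) (at_right 0)"
proof -
  have "filterlim (\<lambda>t. - ln t) at_top (at_right (0::real))"
    using ln_at_0 by (simp add: filterlim_uminus_at_bot)
  then have "((\<lambda>t. exp (- \<sigma> * (- ln t)) * (- ln t) ^ j) \<longlongrightarrow> 0) (at_right 0)"
    by (rule filterlim_compose[OF tendsto_exp_neg_mult_power_0[OF assms]])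
  moreover have "\<forall>\<^sub>F t in at_right 0. exp (- \<sigma> * (- ln t)) * (- ln t) ^ j = exp (\<sigma> * ln t) * \<bar>ln t\<bar> ^ j"
    by (rule eventually_at_rightI[of 0 1]) (auto simp: abs_of_neg)
  ultimately show ?thesis
    by (rule Lim_transform_eventually)
qed

definition log_kernel :: "complex \<Rightarrow> nat \<Rightarrow> real \<Rightarrow> complex" where
  "log_kernel b k t = of_real t powr (b - 1) * of_real ((- ln t) ^ k)"

lemma log_kernel_0 [simp]: "log_kernel b k 0 = 0"
  by (simp add: log_kernel_def)

lemma log_kernel_pos:
  assumes "t > 0"
  shows "log_kernel b k t = exp (b * of_real (ln t)) / of_real t * of_real ((- ln t) ^ k)"
  using assms by (simp add: log_kernel_def powr_def Ln_of_real exp_diff left_diff_distrib exp_of_real)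

lemma log_kernel_shift:
  assumes "t \<ge> 0"
  shows "of_real (t ^ n) * log_kernel b k t = log_kernel (b + of_nat n) k t"
proof (cases "t = 0")
  case False
  then have "t > 0"
    using assms by simp
  then have "(of_real (t ^ n) :: complex) = exp (of_nat n * of_real (ln t))"
    by (metis exp_ln exp_of_nat_mult exp_of_real of_real_power)
  then show ?thesis
    using \<open>t > 0\<close> by (simp add: log_kernel_pos distrib_right exp_add)
qed simp

lemma log_kernel_exp_neg:
  "log_kernel b k (exp (- u)) = exp ((1 - b) * of_real u) * of_real (u ^ k)"
proof -
  have "log_kernel b k (exp (- u)) = exp (b * of_real (- u)) / exp (of_real (- u)) * of_real (u ^ k)"
    by (simp add: log_kernel_pos flip: exp_of_real)
  also have "\<dots> = exp ((1 - b) * of_real u) * of_real (u ^ k)"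
    by (simp flip: exp_diff add: algebra_simps)
  finally show ?thesis .
qed

lemma isCont_log_kernel:
  assumes "t > 0"
  shows "isCont (log_kernel b k) t"
proof -
  have "of_real t \<notin> \<real>\<^sub>\<le>\<^sub>0"
    using assms by (auto simp: complex_nonpos_Reals_iff)
  then show ?thesis
    unfolding log_kernel_def using assms by (intro continuous_intros) auto
qed

text \<open>The recursion in \<open>k\<close> comes from integrating by parts.\<close>

fun log_kernel_primitive :: "complex \<Rightarrow> nat \<Rightarrow> complex \<Rightarrow> complex" where
  "log_kernel_primitive b 0 z = exp (b * Ln z) / b"
| "log_kernel_primitive b (Suc k) z =
     (exp (b * Ln z) * (- Ln z) ^ Suc k + of_nat (Suc k) * log_kernel_primitive b k z) / b"

lemma log_kernel_primitive_has_field_derivative: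
  assumes "b \<noteq> 0" "Re z > 0"
  shows "(log_kernel_primitive b k has_field_derivative exp (b * Ln z) / z * (- Ln z) ^ k) (at z)"
proof -
  have z: "z \<notin> \<real>\<^sub>\<le>\<^sub>0"
    using assms(2) complex_nonpos_Reals_iff[of z] by linarith
  then have "z \<noteq> 0"
    by auto
  have dLn: "(Ln has_field_derivative inverse z) (at z)"
    by (rule has_field_derivative_Ln[OF z])
  have dexp: "((\<lambda>z. exp (b * Ln z)) has_field_derivative exp (b * Ln z) * (b * inverse z)) (at z)"
    by (rule DERIV_chain2[OF DERIV_exp]) (use z in \<open>auto intro!: derivative_eq_intros dLn\<close>)
  show ?thesis
  proof (induction k)
    case 0
    show ?case
      using DERIV_cdivide[OF dexp, of b] assms(1) \<open>z \<noteq> 0\<close> by (simp add: field_simps)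
  next
    case (Suc k)
    have dpow: "((\<lambda>z. (- Ln z) ^ Suc k)
        has_field_derivative of_nat (Suc k) * (- Ln z) ^ k * (- inverse z)) (at z)"
      by (rule derivative_eq_intros dLn refl | simp)+
    have unfold: "log_kernel_primitive b (Suc k)
        = (\<lambda>z. (exp (b * Ln z) * (- Ln z) ^ Suc k + of_nat (Suc k) * log_kernel_primitive b k z) / b)"
      by (rule ext) simp
    show ?case
      unfolding unfold
      by (rule DERIV_cong[OF DERIV_cdivide[OF DERIV_add[OF DERIV_mult[OF dexp dpow]
            DERIV_cmult[OF Suc.IH, of "of_nat (Suc k)"]], of b]])
        (use assms(1) \<open>z \<noteq> 0\<close> in \<open>simp add: field_simps\<close>)
  qed
qed

lemma log_kernel_primitive_has_vector_derivative:
  assumes "b \<noteq> 0" "t > 0"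
  shows "((\<lambda>t. log_kernel_primitive b k (of_real t)) has_vector_derivative log_kernel b k t) (at t)"
proof -
  have "Re (of_real t) > 0"
    using assms(2) by simp
  from log_kernel_primitive_has_field_derivative[OF assms(1) this, of k]
  have "(log_kernel_primitive b k has_field_derivative log_kernel b k t) (at (of_real t))"
    using assms(2) by (simp add: log_kernel_pos Ln_of_real)
  then show ?thesis
    by (rule has_vector_derivative_real_field)
qed

lemma log_kernel_primitive_one: "log_kernel_primitive b k 1 = fact k / b ^ Suc k"
  by (induction k) (auto simp: field_simps)

lemma tendsto_log_kernel_primitive_0:
  assumes "Re b > 0"
  shows "((\<lambda>t::real. log_kernel_primitive b k (of_real t)) \<longlongrightarrow> 0) (at_right 0)"
proof -
  have "b \<noteq> 0"
    using assms by auto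
  have power_Ln: "((\<lambda>t::real. exp (b * Ln (of_real t)) * (- Ln (of_real t)) ^ j) \<longlongrightarrow> 0) (at_right 0)" for j
  proof (rule Lim_null_comparison[OF _ tendsto_exp_mult_ln_power_0[OF assms, of j]])
    show "\<forall>\<^sub>F t in at_right 0. norm (exp (b * Ln (of_real t)) * (- Ln (of_real t)) ^ j)
        \<le> exp (Re b * ln t) * \<bar>ln t\<bar> ^ j"
      by (rule eventually_at_rightI[of 0 1]) (auto simp: Ln_of_real norm_mult norm_power)
  qed
  show ?thesis
  proof (induction k)
    case 0
    show ?case
      using tendsto_divide[OF power_Ln[of 0] tendsto_const[of b]] \<open>b \<noteq> 0\<close> by simp
  next
    case (Suc k)
    show ?case
      using tendsto_divide[OF tendsto_add[OF power_Ln[of "Suc k"] tendsto_mult[OF tendsto_const Suc.IH]]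
          tendsto_const[of b]] \<open>b \<noteq> 0\<close>
      by simp
  qed
qed

lemma log_kernel_has_integral:
  assumes "Re b > 0"
  shows "(log_kernel b k has_integral fact k / b ^ Suc k) {0..1}"
proof -
  have "b \<noteq> 0"
    using assms by auto
  define F where "F = (\<lambda>t::real. if t = 0 then 0 else log_kernel_primitive b k (of_real t))"
  have deriv: "(F has_vector_derivative log_kernel b k t) (at t)" if "t > 0" for t
    using log_kernel_primitive_has_vector_derivative[OF \<open>b \<noteq> 0\<close> that, of k]
    by (rule has_vector_derivative_transform_within_open[of _ _ _ "{0<..}"]) (use that in \<open>auto simp: F_def\<close>)
  have "continuous (at t within {0..1}) F" if "t \<in> {0..1}" for t
  proof (cases "t = 0")
    case True
    have "(F \<longlongrightarrow> 0) (at_right 0)"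
    proof (rule Lim_transform_eventually[OF tendsto_log_kernel_primitive_0[OF assms, of k]])
      show "\<forall>\<^sub>F t in at_right 0. log_kernel_primitive b k (of_real t) = F t"
        by (rule eventually_at_rightI[of 0 1]) (auto simp: F_def)
    qed
    then show ?thesis
      using True unfolding continuous_within by (simp add: at_within_Icc_at_right F_def)
  next
    case False
    with that have "t > 0"
      by simp
    then show ?thesis
      by (rule continuous_at_imp_continuous_within[OF has_vector_derivative_continuous[OF deriv]])
  qed
  then have "continuous_on {0..1} F"
    by (simp add: continuous_on_eq_continuous_within)
  then have "(log_kernel b k has_integral (F 1 - F 0)) {0..1}"
    by (rule fundamental_theorem_of_calculus_interior[rotated]) (use deriv in auto)
  then show ?thesis
    by (simp add: F_def log_kernel_primitive_one)
qed

lemma norm_log_kernel: "norm (log_kernel b k t) = Re (log_kernel (Re b) k t)" if "t \<in> {0..1}"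
proof (cases "t = 0")
  case False
  with that have "t > 0" "ln t \<le> 0"
    by auto
  then show ?thesis
    by (simp add: log_kernel_pos norm_mult norm_divide norm_power exp_of_real
        flip: of_real_mult)
qed simp

lemma has_bochner_integral_log_kernel:
  assumes "Re b > 0"
  shows "has_bochner_integral (lebesgue_on {0..1}) (log_kernel b k) (fact k / b ^ Suc k)"
proof -
  have I: "(log_kernel b k has_integral fact k / b ^ Suc k) {0..1}"
    using assms by (rule log_kernel_has_integral)
  moreover have "(\<lambda>t. Re (log_kernel (Re b) k t)) integrable_on {0..1}"
    using has_integral_Re[OF log_kernel_has_integral, of "of_real (Re b)"] assms
    by (auto simp: integrable_on_def)
  ultimately have "log_kernel b k absolutely_integrable_on {0..1}"
    by (intro absolutely_integrable_integrable_bound[OF eq_refl])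
      (auto simp: norm_log_kernel integrable_on_def)
  then have int: "integrable (lebesgue_on {0..1}) (log_kernel b k)"
    by (simp add: integrable_restrict_space set_integrable_def)
  moreover have "integral\<^sup>L (lebesgue_on {0..1}) (log_kernel b k) = fact k / b ^ Suc k"
    using lebesgue_integral_eq_integral[OF int] I by (simp add: integral_unique)
  ultimately show ?thesis
    by (simp add: has_bochner_integral_iff)
qed

definition pfrac_density :: "(complex \<times> nat) set \<Rightarrow> (complex \<Rightarrow> nat \<Rightarrow> complex) \<Rightarrow> real \<Rightarrow> complex" where
  "pfrac_density S c t = (\<Sum>(a, j)\<in>S. c a j / fact j * log_kernel (- a) j t)"

lemma has_bochner_integral_pfrac_density:
  assumes "finite S" "\<And>a j. (a, j) \<in> S \<Longrightarrow> Re a < 0"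
  shows "has_bochner_integral (lebesgue_on {0..1}) (\<lambda>t. of_real (t ^ n) * pfrac_density S c t)
           (\<Sum>(a, j)\<in>S. c a j / (of_nat n - a) ^ Suc j)"
proof -
  have "Re (of_nat n - fst aj) > 0" if "aj \<in> S" for aj
    using assms(2)[of "fst aj" "snd aj"] that by simp
  then have "has_bochner_integral (lebesgue_on {0..1})
      (\<lambda>t. \<Sum>(a, j)\<in>S. c a j / fact j * log_kernel (of_nat n - a) j t)
      (\<Sum>(a, j)\<in>S. c a j / fact j * (fact j / (of_nat n - a) ^ Suc j))"
    unfolding case_prod_unfold
    by (intro has_bochner_integral_sum has_bochner_integral_mult_right has_bochner_integral_log_kernel)
  moreover have "of_real (t ^ n) * pfrac_density S c t
      = (\<Sum>(a, j)\<in>S. c a j / fact j * log_kernel (of_nat n - a) j t)"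
    if "t \<in> space (lebesgue_on {0..1})" for t
  proof -
    have "of_real (t ^ n) * log_kernel (- a) j t = log_kernel (of_nat n - a) j t" for a j
      using log_kernel_shift[of t n "- a" j] that by simp
    then show ?thesis
      unfolding pfrac_density_def sum_distrib_left by (intro sum.cong refl) (auto simp: mult.left_commute)
  qed
  ultimately show ?thesis
    by (subst has_bochner_integral_cong[OF refl]) auto
qed

lemma pfrac_density_exp_neg:
  "pfrac_density S c (exp (- u)) = of_real (exp u) * exp_poly S (\<lambda>a j. c a j / fact j) u"
  unfolding pfrac_density_def exp_poly_def sum_distrib_left
  by (intro sum.cong refl)
    (auto simp: log_kernel_exp_neg exp_add[symmetric] algebra_simps simp flip: exp_of_real)

lemma isCont_pfrac_density:
  assumes "t > 0"
  shows "isCont (pfrac_density S c) t"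
  unfolding pfrac_density_def case_prod_unfold using assms
  by (intro continuous_intros isCont_log_kernel)

section \<open>Measures and densities with the same moments\<close>

lemma integrable_lebesgue_on_continuous_mult:
  fixes f g :: "real \<Rightarrow> real"
  assumes f: "continuous_on {a..b} f" and g: "integrable (lebesgue_on {a..b}) g"
  shows "integrable (lebesgue_on {a..b}) (\<lambda>t. f t * g t)"
proof -
  have "(\<lambda>t. f t * g t) absolutely_integrable_on {a..b}"
  proof (rule absolutely_integrable_bounded_measurable_product_real)
    show "f \<in> borel_measurable (lebesgue_on {a..b})"
      using f by (rule continuous_imp_measurable_on_sets_lebesgue) simp
    show "bounded (f ` {a..b})"
      using f by (intro compact_imp_bounded compact_continuous_image) auto
    show "g absolutely_integrable_on {a..b}"
      using g by (simp add: integrable_restrict_space set_integrable_def)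
  qed simp
  then show ?thesis
    by (simp add: integrable_restrict_space set_integrable_def)
qed

lemma integrable_continuous_on_Icc_measure:
  fixes M :: "real measure" and f :: "real \<Rightarrow> real"
  assumes sets: "sets M = sets (restrict_space borel {a..b})" and fin: "emeasure M (space M) < \<infinity>"
    and f: "continuous_on {a..b} f"
  shows "integrable M f"
proof -
  interpret finite_measure M
    using fin by (intro finite_measureI) simp
  have space: "space M = {a..b}"
    using sets_eq_imp_space_eq[OF sets] by simp
  obtain B where B: "\<forall>t\<in>{a..b}. \<bar>f t\<bar> \<le> B"
    using compact_imp_bounded[OF compact_continuous_image[OF f compact_Icc]] by (auto simp: bounded_real)
  have "f \<in> borel_measurable M"
    unfolding measurable_cong_sets[OF sets refl] by (rule borel_measurable_continuous_on_restrict[OF f])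
  then show ?thesis
    using B space by (intro integrable_const_bound[of _ B]) auto
qed

lemma abs_integral_mult_diff_le:
  fixes f h g :: "'a \<Rightarrow> real"
  assumes "integrable M (\<lambda>x. f x * g x)" "integrable M (\<lambda>x. h x * g x)" "integrable M g"
    and "\<And>x. x \<in> space M \<Longrightarrow> \<bar>f x - h x\<bar> \<le> \<epsilon>"
  shows "\<bar>(\<integral>x. f x * g x \<partial>M) - (\<integral>x. h x * g x \<partial>M)\<bar> \<le> \<epsilon> * (\<integral>x. \<bar>g x\<bar> \<partial>M)"
proof -
  have int: "integrable M (\<lambda>x. (f x - h x) * g x)"
    using assms(1,2) by (simp add: left_diff_distrib)
  have "\<bar>(\<integral>x. f x * g x \<partial>M) - (\<integral>x. h x * g x \<partial>M)\<bar> = \<bar>\<integral>x. (f x - h x) * g x \<partial>M\<bar>"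
    using assms(1,2) by (simp add: left_diff_distrib)
  also have "\<dots> \<le> (\<integral>x. \<bar>(f x - h x) * g x\<bar> \<partial>M)"
    by (rule integral_abs_bound)
  also have "\<dots> \<le> (\<integral>x. \<epsilon> * \<bar>g x\<bar> \<partial>M)"
  proof (rule integral_mono)
    show "integrable M (\<lambda>x. \<bar>(f x - h x) * g x\<bar>)"
      using int by (rule integrable_abs)
    show "integrable M (\<lambda>x. \<epsilon> * \<bar>g x\<bar>)"
      using assms(3) by simp
    show "\<bar>(f x - h x) * g x\<bar> \<le> \<epsilon> * \<bar>g x\<bar>" if "x \<in> space M" for x
      using assms(4)[OF that] by (simp add: abs_mult mult_right_mono)
  qed
  finally show ?thesis
    by simp
qed

lemma moments_eq_imp_integral_poly_eq:
  fixes M :: "real measure" and g :: "real \<Rightarrow> real"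
  assumes sets: "sets M = sets (restrict_space borel {a..b})" and fin: "emeasure M (space M) < \<infinity>"
    and g: "integrable (lebesgue_on {a..b}) g"
    and moments: "\<And>n. (\<integral>t. t ^ n \<partial>M) = (\<integral>t. t ^ n * g t \<partial>lebesgue_on {a..b})"
  shows "(\<integral>t. (\<Sum>i\<le>m. \<alpha> i * t ^ i) \<partial>M) = (\<integral>t. (\<Sum>i\<le>m. \<alpha> i * t ^ i) * g t \<partial>lebesgue_on {a..b})"
proof -
  have "(\<integral>t. (\<Sum>i\<le>m. \<alpha> i * t ^ i) \<partial>M) = (\<Sum>i\<le>m. \<integral>t. \<alpha> i * t ^ i \<partial>M)"
    using sets fin
    by (intro Bochner_Integration.integral_sum integrable_continuous_on_Icc_measure continuous_intros)
      auto
  also have "\<dots> = (\<Sum>i\<le>m. \<integral>t. \<alpha> i * (t ^ i * g t) \<partial>lebesgue_on {a..b})"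
    by (simp add: moments)
  also have "\<dots> = (\<integral>t. (\<Sum>i\<le>m. \<alpha> i * (t ^ i * g t)) \<partial>lebesgue_on {a..b})"
    using g by (intro Bochner_Integration.integral_sum[symmetric] integrable_mult_right
        integrable_lebesgue_on_continuous_mult continuous_intros)
  finally show ?thesis
    by (simp add: sum_distrib_right mult.assoc)
qed

lemma moments_eq_imp_integral_continuous_eq:
  fixes M :: "real measure" and g f :: "real \<Rightarrow> real"
  assumes sets: "sets M = sets (restrict_space borel {a..b})" and fin: "emeasure M (space M) < \<infinity>"
    and g: "integrable (lebesgue_on {a..b}) g"
    and moments: "\<And>n. (\<integral>t. t ^ n \<partial>M) = (\<integral>t. t ^ n * g t \<partial>lebesgue_on {a..b})"
    and f: "continuous_on {a..b} f"
  shows "(\<integral>t. f t \<partial>M) = (\<integral>t. f t * g t \<partial>lebesgue_on {a..b})"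
proof -
  let ?N = "lebesgue_on {a..b}"
  interpret finite_measure M
    using fin by (intro finite_measureI) simp
  have space: "space M = {a..b}"
    using sets_eq_imp_space_eq[OF sets] by simp
  have intM: "integrable M h" if "continuous_on {a..b} h" for h :: "real \<Rightarrow> real"
    by (rule integrable_continuous_on_Icc_measure[OF sets fin that])
  have intN: "integrable ?N (\<lambda>t. h t * g t)" if "continuous_on {a..b} h" for h :: "real \<Rightarrow> real"
    using that g by (rule integrable_lebesgue_on_continuous_mult)
  define C where "C = measure M (space M) + (\<integral>t. \<bar>g t\<bar> \<partial>?N)"
  have "C \<ge> 0"
    unfolding C_def by (auto intro!: add_nonneg_nonneg integral_nonneg_AE)
  have approx: "\<bar>(\<integral>t. f t \<partial>M) - (\<integral>t. f t * g t \<partial>?N)\<bar> \<le> \<epsilon> * C" if "\<epsilon> > 0" for \<epsilon>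
  proof -
    obtain P where "real_polynomial_function P" and P: "\<And>t. t \<in> {a..b} \<Longrightarrow> \<bar>f t - P t\<bar> < \<epsilon>"
      using Stone_Weierstrass_real_polynomial_function[OF compact_Icc f \<open>\<epsilon> > 0\<close>] by blast
    then obtain \<alpha> m where P_eq: "P = (\<lambda>t. \<Sum>i\<le>m. \<alpha> i * t ^ i)"
      unfolding real_polynomial_function_iff_sum by blast
    have Pc: "continuous_on {a..b} P"
      unfolding P_eq by (intro continuous_intros)
    have "\<bar>(\<integral>t. f t \<partial>M) - (\<integral>t. P t \<partial>M)\<bar> \<le> \<epsilon> * measure M (space M)"
      using abs_integral_mult_diff_le[of M f "\<lambda>_. 1" P \<epsilon>] intM[OF f] intM[OF Pc] P space
      by (simp add: less_imp_le)
    moreover have "\<bar>(\<integral>t. f t * g t \<partial>?N) - (\<integral>t. P t * g t \<partial>?N)\<bar> \<le> \<epsilon> * (\<integral>t. \<bar>g t\<bar> \<partial>?N)"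
      using intN[OF f] intN[OF Pc] g P by (intro abs_integral_mult_diff_le) (auto simp: less_imp_le)
    moreover have "(\<integral>t. P t \<partial>M) = (\<integral>t. P t * g t \<partial>?N)"
      unfolding P_eq using sets fin g moments by (rule moments_eq_imp_integral_poly_eq)
    ultimately show ?thesis
      unfolding C_def by (simp add: distrib_left)
  qed
  have "(\<integral>t. f t \<partial>M) - (\<integral>t. f t * g t \<partial>?N) = 0"
  proof (rule dense_eq0_I)
    fix e :: real
    assume "e > 0"
    with \<open>C \<ge> 0\<close> have "e / (C + 1) * C \<le> e"
      by (simp add: field_simps)
    then show "\<bar>(\<integral>t. f t \<partial>M) - (\<integral>t. f t * g t \<partial>?N)\<bar> \<le> e"
      using approx[of "e / (C + 1)"] \<open>C \<ge> 0\<close> \<open>e > 0\<close> by simp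
  qed
  then show ?thesis
    by simp
qed

lemma tent_mult_le_indicator:
  fixes g :: "real \<Rightarrow> real"
  assumes "\<delta> > 0" "\<gamma> \<le> 0" "\<And>t. \<bar>t - t0\<bar> < \<delta> \<Longrightarrow> g t \<le> \<gamma>"
  shows "max 0 (\<delta> - \<bar>t - t0\<bar>) * g t \<le> indicator {t0 - \<delta> / 2 .. t0 + \<delta> / 2} t * (\<delta> / 2 * \<gamma>)"
proof (cases "\<bar>t - t0\<bar> < \<delta>")
  case True
  then have "max 0 (\<delta> - \<bar>t - t0\<bar>) * g t \<le> max 0 (\<delta> - \<bar>t - t0\<bar>) * \<gamma>"
    using assms(3) by (intro mult_left_mono) auto
  also have "\<dots> \<le> (indicator {t0 - \<delta> / 2 .. t0 + \<delta> / 2} t * (\<delta> / 2)) * \<gamma>"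
    using assms(2) by (intro mult_right_mono_neg) (auto simp: indicator_def split: abs_split)
  finally show ?thesis
    by (simp add: mult.assoc)
next
  case False
  then show ?thesis
    using assms(1) by (auto simp: indicator_def split: abs_split)
qed

lemma integrals_nonneg_imp_density_nonneg:
  fixes g :: "real \<Rightarrow> real"
  assumes g: "integrable (lebesgue_on {a..b}) g"
    and nonneg: "\<And>\<phi>. continuous_on {a..b} \<phi> \<Longrightarrow> (\<And>t. \<phi> t \<ge> 0) \<Longrightarrow>
        0 \<le> (\<integral>t. \<phi> t * g t \<partial>lebesgue_on {a..b})"
    and t0: "a < t0" "t0 < b" and cont: "isCont g t0"
  shows "g t0 \<ge> 0"
proof (rule ccontr)
  let ?N = "lebesgue_on {a..b}"
  assume "\<not> g t0 \<ge> 0"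
  then have neg: "g t0 < 0"
    by simp
  obtain d where "d > 0" and d: "\<And>t. dist t t0 < d \<Longrightarrow> dist (g t) (g t0) < - g t0 / 2"
    using cont neg unfolding continuous_at_eps_delta by (metis neg_0_less_iff_less half_gt_zero)
  define \<delta> where "\<delta> = min d (min (t0 - a) (b - t0))"
  have \<delta>: "\<delta> > 0" "\<delta> \<le> t0 - a" "\<delta> \<le> b - t0"
    using \<open>d > 0\<close> t0 by (auto simp: \<delta>_def)
  have g_near: "g t < g t0 / 2" if "\<bar>t - t0\<bar> < \<delta>" for t
    using d[of t] that by (auto simp: dist_real_def \<delta>_def)
  define \<phi> where "\<phi> = (\<lambda>t. max 0 (\<delta> - \<bar>t - t0\<bar>))"
  define I where "I = {t0 - \<delta> / 2 .. t0 + \<delta> / 2}"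
  define h where "h = (\<lambda>t. indicator I t * (\<delta> / 2 * (g t0 / 2)))"
  have bound: "\<phi> t * g t \<le> h t" for t
    unfolding \<phi>_def h_def I_def using \<delta>(1) neg g_near
    by (intro tent_mult_le_indicator) (auto simp: less_imp_le)
  have "I \<subseteq> {a..b}"
    using \<delta> by (auto simp: I_def)
  then have "I \<in> sets ?N" "emeasure ?N I < \<infinity>" "measure ?N I = \<delta>"
    using \<delta>(1)
    by (auto simp: sets_restrict_space_iff emeasure_restrict_space measure_restrict_space I_def)
  then have h_int: "has_bochner_integral ?N h (\<delta> * (\<delta> / 2 * (g t0 / 2)))"
    unfolding h_def by (metis has_bochner_integral_mult_left has_bochner_integral_real_indicator)
  have \<phi>_cont: "continuous_on {a..b} \<phi>"
    unfolding \<phi>_def by (intro continuous_intros)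
  have "(\<integral>t. \<phi> t * g t \<partial>?N) \<le> (\<integral>t. h t \<partial>?N)"
    using integrable_lebesgue_on_continuous_mult[OF \<phi>_cont g] integrable.intros[OF h_int] bound
    by (rule integral_mono)
  also have "\<dots> = \<delta> * (\<delta> / 2 * (g t0 / 2))"
    using h_int by (rule has_bochner_integral_integral_eq)
  also have "\<dots> < 0"
    using \<delta>(1) neg by (simp add: mult_pos_neg)
  finally show False
    using nonneg[OF \<phi>_cont] by (auto simp: \<phi>_def)
qed

lemma moments_eq_imp_density_nonneg:
  fixes M :: "real measure" and g :: "real \<Rightarrow> real"
  assumes sets: "sets M = sets (restrict_space borel {a..b})" and fin: "emeasure M (space M) < \<infinity>"
    and g: "integrable (lebesgue_on {a..b}) g"
    and moments: "\<And>n. (\<integral>t. t ^ n \<partial>M) = (\<integral>t. t ^ n * g t \<partial>lebesgue_on {a..b})"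
    and t0: "a < t0" "t0 < b" and cont: "isCont g t0"
  shows "g t0 \<ge> 0"
  using g _ t0 cont
proof (rule integrals_nonneg_imp_density_nonneg)
  fix \<phi> :: "real \<Rightarrow> real"
  assume "continuous_on {a..b} \<phi>" "\<And>t. \<phi> t \<ge> 0"
  moreover have "0 \<le> (\<integral>t. \<phi> t \<partial>M)"
    using \<open>\<And>t. \<phi> t \<ge> 0\<close> by (intro integral_nonneg_AE AE_I2)
  ultimately show "0 \<le> (\<integral>t. \<phi> t * g t \<partial>lebesgue_on {a..b})"
    using moments_eq_imp_integral_continuous_eq[OF sets fin g moments] by simp
qed

lemma hausdorff_moment_seq_density_nonneg:
  fixes x :: "nat \<Rightarrow> real" and g :: "real \<Rightarrow> real"
  assumes "hausdorff_moment_seq x"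
    and density: "\<And>n. has_bochner_integral (lebesgue_on {0..1}) (\<lambda>t. t ^ n * g t) (x n)"
    and "0 < t" "t < 1" "isCont g t"
  shows "g t \<ge> 0"
proof -
  obtain M :: "real measure" where "sets M = sets (restrict_space borel {0..1})"
    and "emeasure M (space M) < \<infinity>" and "\<And>n. x n = (\<integral>t. t ^ n \<partial>M)"
    using assms(1) unfolding hausdorff_moment_seq_def by blast
  moreover have "integrable (lebesgue_on {0..1}) g"
    using density[of 0] by (simp add: has_bochner_integral_iff)
  moreover have "x n = (\<integral>t. t ^ n * g t \<partial>lebesgue_on {0..1})" for n
    using density[of n] by (simp add: has_bochner_integral_iff)
  ultimately show ?thesis
    using assms(3-5) by (intro moments_eq_imp_density_nonneg[of M 0 1 g]) auto
qed

lemma has_bochner_integral_rational_moment: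
  fixes p q :: "real poly"
  defines "P \<equiv> map_poly complex_of_real p" and "Q \<equiv> map_poly complex_of_real q"
  assumes pfrac: "\<And>x. poly P x \<noteq> 0 \<Longrightarrow> poly Q x / poly P x = (\<Sum>(a, j)\<in>S. c a j / (x - a) ^ Suc j)"
    and "finite S" "\<And>a j. (a, j) \<in> S \<Longrightarrow> Re a < 0" "\<And>a. poly P a = 0 \<Longrightarrow> Re a < 0"
  shows "has_bochner_integral (lebesgue_on {0..1}) (\<lambda>t. t ^ n * Re (pfrac_density S c t))
           (poly q (real n) / poly p (real n))"
proof -
  have "poly P (of_nat n) \<noteq> 0"
    using assms(6)[of "of_nat n"] by fastforce
  moreover have "poly P (of_nat n) = of_real (poly p (real n))"
    "poly Q (of_nat n) = of_real (poly q (real n))"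
    using poly_map_poly_of_real[of p "real n"] poly_map_poly_of_real[of q "real n"]
    by (simp_all add: P_def Q_def)
  ultimately have "(\<Sum>(a, j)\<in>S. c a j / (of_nat n - a) ^ Suc j)
      = of_real (poly q (real n) / poly p (real n))"
    using pfrac[of "of_nat n"] by simp
  moreover have "has_bochner_integral (lebesgue_on {0..1}) (\<lambda>t. of_real (t ^ n) * pfrac_density S c t)
      (\<Sum>(a, j)\<in>S. c a j / (of_nat n - a) ^ Suc j)"
    using assms(4,5) by (rule has_bochner_integral_pfrac_density)
  ultimately show ?thesis
    using has_bochner_integral_Re by fastforce
qed

theorem not_hausdorff_moment_seq_dominant_nonreal_pole:
  fixes p q :: "real poly" and w :: complex
  defines "P \<equiv> map_poly complex_of_real p" and "Q \<equiv> map_poly complex_of_real q"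
  assumes monic: "lead_coeff p = 1" and deg: "degree q < degree p"
    and poles_left: "\<And>a. poly P a = 0 \<Longrightarrow> Re a < 0"
    and pole: "poly P w = 0" "Im w > 0" "poly Q w \<noteq> 0"
    and dominant: "\<And>a. poly P a = 0 \<Longrightarrow> a \<noteq> w \<Longrightarrow> a \<noteq> cnj w \<Longrightarrow> Re a < Re w"
  shows "\<not> hausdorff_moment_seq (\<lambda>n. poly q (real n) / poly p (real n))"
proof
  assume moment_seq: "hausdorff_moment_seq (\<lambda>n. poly q (real n) / poly p (real n))"
  obtain c where pfrac: "\<And>x. poly P x \<noteq> 0 \<Longrightarrow>
       poly Q x / poly P x = (\<Sum>(a, j)\<in>(SIGMA a:{a. poly P a = 0}. {..<order a P}). c a j / (x - a) ^ Suc j)"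
    and top_nonzero: "\<And>a. poly P a = 0 \<Longrightarrow> poly Q a \<noteq> 0 \<Longrightarrow> c a (order a P - 1) \<noteq> 0"
    and top_cnj: "\<And>a. poly P a = 0 \<Longrightarrow> c (cnj a) (order a P - 1) = cnj (c a (order a P - 1))"
    using real_pfrac_decomposition[OF monic deg] unfolding P_def Q_def by blast
  define S where "S = (SIGMA a:{a. poly P a = 0}. {..<order a P})"
  define g where "g = (\<lambda>t. Re (pfrac_density S c t))"
  have "P \<noteq> 0"
    using monic by (auto simp: P_def map_poly_eq_0_iff)
  then have "finite S"
    unfolding S_def by (auto intro: poly_roots_finite)
  have g_nonneg: "g t \<ge> 0" if "0 < t" "t < 1" for t
  proof (rule hausdorff_moment_seq_density_nonneg[OF moment_seq _ that])
    show "has_bochner_integral (lebesgue_on {0..1}) (\<lambda>t. t ^ n * g t)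
        (poly q (real n) / poly p (real n))" for n
      unfolding g_def using pfrac \<open>finite S\<close> poles_left
      by (intro has_bochner_integral_rational_moment) (auto simp: P_def Q_def S_def)
    show "isCont g t"
      unfolding g_def using \<open>0 < t\<close> by (intro continuous_Re isCont_pfrac_density)
  qed
  have "order (cnj w) P = order w P"
    using order_cnj[OF _ \<open>P \<noteq> 0\<close>] by (simp add: P_def map_poly_cnj_of_real)
  moreover have "poly P (cnj w) = 0"
    using pole(1) poly_map_poly_cnj[of P w] by (simp add: P_def map_poly_cnj_of_real)
  moreover have "order w P > 0"
    using pole(1) \<open>P \<noteq> 0\<close> by (simp add: order_root)
  ultimately obtain u where "u > 0" and u: "Re (exp_poly S (\<lambda>a j. c a j / fact j) u) < 0"
    using exp_poly_Re_negative_somewhere[OF \<open>finite S\<close>, of w "order w P - 1" "\<lambda>a j. c a j / fact j"]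
      pole dominant top_nonzero[OF pole(1,3)] top_cnj[OF pole(1)]
    by (fastforce simp: S_def)
  have "g (exp (- u)) = exp u * Re (exp_poly S (\<lambda>a j. c a j / fact j) u)"
    unfolding g_def pfrac_density_exp_neg by simp
  then have "g (exp (- u)) < 0"
    using u by (simp add: mult_pos_neg)
  then show False
    using g_nonneg[of "exp (- u)"] \<open>u > 0\<close> by simp
qed

theorem mainTheorem4:
  fixes p q :: "real poly"
    and s d :: nat
    and r :: "nat \<Rightarrow> real" and l :: "nat \<Rightarrow> nat"
    and z :: "nat \<Rightarrow> complex" and m :: "nat \<Rightarrow> nat"
  assumes d_pos: "d \<ge> 1"
    and r_distinct: "inj_on r {1..s}"
    and r_neg: "\<forall>i\<in>{1..s}. r i < 0"
    and l_pos: "\<forall>i\<in>{1..s}. l i \<ge> 1"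
    and z_distinct: "inj_on z {1..d}"
    and z_re: "\<forall>k\<in>{1..d}. Re (z k) < 0"
    and z_im: "\<forall>k\<in>{1..d}. Im (z k) > 0"
    and m_pos: "\<forall>i\<in>{1..d}. m i \<ge> 1"
    and p_form: "map_poly complex_of_real p =
        (\<Prod>i\<in>{1..s}. [:- complex_of_real (r i), 1:] ^ l i) *
        (\<Prod>i\<in>{1..d}. [:- z i, 1:] ^ m i) *
        (\<Prod>i\<in>{1..d}. [:- cnj (z i), 1:] ^ m i)"
    and no_common: "\<forall>w::complex. \<not> (poly (map_poly complex_of_real p) w = 0 \<and>
                                     poly (map_poly complex_of_real q) w = 0)"
    and deg: "degree q < degree p"
    and dom_r: "\<forall>i\<in>{1..s}. Re (z 1) > r i"
    and dom_z: "\<forall>i\<in>{2..d}. Re (z 1) > Re (z i)"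
  shows "\<not> hausdorff_moment_seq (\<lambda>n. poly q (real n) / poly p (real n))"
proof (rule not_hausdorff_moment_seq_dominant_nonreal_pole[where w = "z 1"])
  \<comment> \<open>Only the location of the roots matters.\<close>
  have "{1..d} = insert 1 {2..d}"
    using d_pos by auto
  then have roots: "(\<exists>i\<in>{1..s}. a = of_real (r i)) \<or> a = z 1 \<or> a = cnj (z 1)
      \<or> (\<exists>i\<in>{2..d}. a = z i \<or> a = cnj (z i))"
    if "poly (map_poly complex_of_real p) a = 0" for a
    using that unfolding p_form by (auto simp: poly_prod)
  have "lead_coeff (map_poly complex_of_real p) = 1"
    unfolding p_form by (simp add: lead_coeff_mult lead_coeff_prod lead_coeff_power)
  then show "lead_coeff p = 1"
    by (simp add: degree_map_poly coeff_map_poly)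
  show "degree q < degree p"
    by (rule deg)
  show "Re a < 0" if "poly (map_poly complex_of_real p) a = 0" for a
    using roots[OF that] r_neg z_re d_pos by auto
  have "1 \<in> {1..d}"
    using d_pos by simp
  then have "m 1 > 0"
    using m_pos by fastforce
  then have "poly (\<Prod>i\<in>{1..d}. [:- z i, 1:] ^ m i) (z 1) = 0"
    using d_pos by (auto simp: poly_prod intro!: bexI[of _ 1])
  then show root: "poly (map_poly complex_of_real p) (z 1) = 0"
    unfolding p_form by simp
  show "Im (z 1) > 0"
    using z_im d_pos by auto
  show "poly (map_poly complex_of_real q) (z 1) \<noteq> 0"
    using no_common root by blast
  show "Re a < Re (z 1)"
    if "poly (map_poly complex_of_real p) a = 0" "a \<noteq> z 1" "a \<noteq> cnj (z 1)" for a
    using roots[OF that(1)] that(2,3) dom_r dom_z by auto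
qed

end
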